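(* Let $M\in\mathrm{Mat}(d,\mathbb{Z})$ and $n\in\mathbb{N}$, and consider the map $x\mapsto Mx \bmod n$ on $\tilde L_n=(\mathbb{Z}/n\mathbb{Z})^d$. Then for every periodic point $y$ of this map, the pretail graph of $y$ is isomorphic (as a directed graph) to the pretail graph of the fixed point $0$. Reversing all edge directions of the pretail graph of $0$ yields a rooted tree with root $0$, and this tree is trivial (consists of the single vertex $0$) if and only if $M$ is invertible on $\tilde L_n$.
   Context: A point $y\in\tilde L_n$ is periodic if $M^k y\equiv y \pmod n$ for some $k\ge1$. Given a periodic point $y$, a finite set of iterates $\{x, Mx, \dots, M^j x = y\}$ (mod $n$) is called a pretail of $y$ if $y$ is the only periodic point in it; $j$ is its length. The pretail graph of $y$ is the directed graph obtained by combining all pretails of $y$: its vertices are the points of all pretails of $y$, with a directed edge $z\to Mz$ for every vertex $z\neq y$ (so no edge leaves $y$). *)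

theory Defs
  imports "HOL-Analysis.Analysis"
begin

text \<open>The lattice (Z/nZ)^d, represented by integer vectors with entries in {0..<n}.\<close>
definition Ltil :: "int \<Rightarrow> (int ^ 'd) set" where
  "Ltil n = {x. \<forall>i. 0 \<le> x $ i \<and> x $ i < n}"

definition Tmap :: "int ^ 'd ^ 'd \<Rightarrow> int \<Rightarrow> int ^ 'd \<Rightarrow> int ^ 'd" where
  "Tmap M n x = (\<chi> i. (M *v x) $ i mod n)"

definition periodic_pt :: "int ^ 'd ^ 'd \<Rightarrow> int \<Rightarrow> int ^ 'd \<Rightarrow> bool" where
  "periodic_pt M n y \<longleftrightarrow> y \<in> Ltil n \<and> (\<exists>k\<ge>1. (Tmap M n ^^ k) y = y)"

definition is_pretail :: "int ^ 'd ^ 'd \<Rightarrow> int \<Rightarrow> int ^ 'd \<Rightarrow> (int ^ 'd) set \<Rightarrow> bool" where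
  "is_pretail M n y S \<longleftrightarrow>
     (\<exists>x j. x \<in> Ltil n \<and> (Tmap M n ^^ j) x = y \<and>
            S = {(Tmap M n ^^ i) x | i. i \<le> j} \<and>
            {z \<in> S. periodic_pt M n z} = {y})"

definition pretail_vertices :: "int ^ 'd ^ 'd \<Rightarrow> int \<Rightarrow> int ^ 'd \<Rightarrow> (int ^ 'd) set" where
  "pretail_vertices M n y = \<Union>{S. is_pretail M n y S}"

definition pretail_edges :: "int ^ 'd ^ 'd \<Rightarrow> int \<Rightarrow> int ^ 'd \<Rightarrow> ((int ^ 'd) \<times> (int ^ 'd)) set" where
  "pretail_edges M n y = {(z, Tmap M n z) | z. z \<in> pretail_vertices M n y \<and> z \<noteq> y}"

definition digraph_iso :: "'a set \<Rightarrow> ('a \<times> 'a) set \<Rightarrow> 'b set \<Rightarrow> ('b \<times> 'b) set \<Rightarrow> bool" where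
  "digraph_iso V1 E1 V2 E2 \<longleftrightarrow>
     (\<exists>f. bij_betw f V1 V2 \<and> (\<forall>a\<in>V1. \<forall>b\<in>V1. (a, b) \<in> E1 \<longleftrightarrow> (f a, f b) \<in> E2))"

definition rooted_tree :: "'a set \<Rightarrow> ('a \<times> 'a) set \<Rightarrow> 'a \<Rightarrow> bool" where
  "rooted_tree V E r \<longleftrightarrow>
     finite V \<and> r \<in> V \<and> E \<subseteq> V \<times> V \<and>
     (\<forall>u. (u, r) \<notin> E) \<and>
     (\<forall>v\<in>V - {r}. \<exists>!u. (u, v) \<in> E) \<and>
     (\<forall>v\<in>V. (r, v) \<in> E\<^sup>*)"

end

theory Submission
  imports Defs
begin

text \<open>Since \<open>Ltil n\<close> is finite, some power \<open>P = T\<^sup>m\<close> of \<open>T: x \<mapsto> M x mod n\<close> is idempotent.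
  The periodic points are exactly the fixed points of \<open>P\<close>, and every \<open>z\<close> splits additively as
  \<open>z = (z - P z) + P z\<close>, a point of the eventual kernel \<open>ker P\<close> plus a periodic point. As \<open>T\<close>
  commutes with this splitting, the orbit of \<open>z\<close> becomes periodic exactly when that of its
  kernel part reaches \<open>0\<close>. Hence \<open>z \<mapsto> z - P z\<close> maps the pretail graph of any periodic \<open>y\<close>
  isomorphically onto the pretail graph of \<open>0\<close>, whose vertex set is \<open>ker P\<close>. That graph is an
  in-tree towards \<open>0\<close> since every vertex other than \<open>0\<close> has the single out-edge \<open>z \<rightarrow> T z\<close>, and
  \<open>ker P = {0}\<close> holds iff \<open>T\<close> is injective, i.e. bijective on the finite set \<open>Ltil n\<close>.\<close>

lemma finite_Ltil: "finite (Ltil n)"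
proof (rule finite_imageD)
  show "finite (vec_nth ` Ltil n)"
    by (rule finite_subset[of _ "UNIV \<rightarrow>\<^sub>E {0..<n}"]) (auto simp: Ltil_def intro: finite_PiE)
  show "inj_on vec_nth (Ltil n)"
    by (simp add: inj_on_def vec_eq_iff)
qed

lemma funpow_in_invariant_set:
  assumes "\<And>x. x \<in> V \<Longrightarrow> f x \<in> V" and "x \<in> V"
  shows "(f ^^ k) x \<in> V"
  by (induction k) (simp_all add: assms)

lemma funpow_apply_funpow: "(f ^^ a) ((f ^^ b) x) = (f ^^ (a + b)) x"
  by (simp add: funpow_add)

lemma funpow_commute_funpow: "(f ^^ a) ((f ^^ b) x) = (f ^^ b) ((f ^^ a) x)"
  by (metis add.commute comp_apply funpow_add)

lemma finite_self_map_idempotent_power: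
  assumes "finite V" and maps: "\<And>x. x \<in> V \<Longrightarrow> f x \<in> V"
  shows "\<exists>m\<ge>1. \<forall>x\<in>V. (f ^^ m) ((f ^^ m) x) = (f ^^ m) x"
proof -
  let ?F = "\<lambda>k. restrict (f ^^ k) V"
  have "range ?F \<subseteq> V \<rightarrow>\<^sub>E V"
    using funpow_in_invariant_set[OF maps] by auto
  then have "finite (range ?F)"
    by (rule finite_subset) (simp add: finite_PiE \<open>finite V\<close>)
  then have "\<not> inj ?F"
    using finite_imageD infinite_UNIV_nat by blast
  then obtain a0 b0 where "a0 \<noteq> b0" and "?F a0 = ?F b0"
    by (auto simp: inj_def)
  then obtain a b where "a < b" and "?F a = ?F b"
    by (metis linorder_neqE_nat)
  then have ab: "(f ^^ a) x = (f ^^ b) x" if "x \<in> V" for x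
    using that by (metis restrict_apply')
  define p where "p = b - a"
  have cycle: "(f ^^ (p * t)) ((f ^^ a) x) = (f ^^ a) x" if "x \<in> V" for x t
  proof -
    have "(f ^^ p) ((f ^^ a) x) = (f ^^ (p + a)) x"
      by (simp add: funpow_add)
    also have "p + a = b"
      using \<open>a < b\<close> by (simp add: p_def)
    finally have "(f ^^ p) ((f ^^ a) x) = (f ^^ a) x"
      using ab[OF that] by simp
    from funpow_mod_eq[where m = "p * t", OF this] show ?thesis
      by simp
  qed
  define m where "m = p * (a + 1)"
  have "1 \<le> p"
    using \<open>a < b\<close> by (simp add: p_def)
  then have "a \<le> m" "1 \<le> m"
    by (simp_all add: m_def trans_le_add2)
  have "(f ^^ m) ((f ^^ m) x) = (f ^^ m) x" if "x \<in> V" for x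
  proof -
    have "m + m = (m - a) + (p * (a + 1) + a)"
      using \<open>a \<le> m\<close> by (simp add: m_def)
    then have "(f ^^ m) ((f ^^ m) x) = (f ^^ (m - a)) ((f ^^ (p * (a + 1))) ((f ^^ a) x))"
      by (metis comp_apply funpow_add)
    also have "\<dots> = (f ^^ (m - a + a)) x"
      by (simp only: cycle[OF that] funpow_add comp_apply)
    finally show ?thesis
      using \<open>a \<le> m\<close> by simp
  qed
  then show ?thesis
    using \<open>1 \<le> m\<close> by blast
qed

lemma funpow_idempotent_mult:
  assumes "(f ^^ m) ((f ^^ m) x) = (f ^^ m) x" and "t \<ge> 1"
  shows "(f ^^ (m * t)) x = (f ^^ m) x"
  using \<open>t \<ge> 1\<close>
proof (induction t rule: dec_induct)
  case (step t)
  then show ?case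
    using assms(1) by (simp add: funpow_add)
qed simp

lemma funpow_idempotent_fixed:
  assumes "(f ^^ m) ((f ^^ m) x) = (f ^^ m) x" and "(f ^^ k) x = x" and "k \<ge> 1"
  shows "(f ^^ m) x = x"
proof -
  from funpow_mod_eq[where m = "m * k", OF assms(2)]
  have "x = (f ^^ (m * k)) x"
    by simp
  also have "\<dots> = (f ^^ m) x"
    using funpow_idempotent_mult[OF assms(1)] \<open>k \<ge> 1\<close> by simp
  finally show ?thesis
    by simp
qed

lemma funpow_idempotent_reaches_fixpoint:
  assumes "(f ^^ m) ((f ^^ m) x) = (f ^^ m) x" and "m \<ge> 1"
    and "(f ^^ j) x = c" and "f c = c"
  shows "(f ^^ m) x = c"
proof -
  have fixed: "(f ^^ i) c = c" for i
    using \<open>f c = c\<close> by (induction i) simp_all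
  show ?thesis
  proof (cases "j = 0")
    case True
    then show ?thesis
      using assms(3) fixed by simp
  next
    case False
    have "(f ^^ m) x = (f ^^ (m * j)) x"
      using funpow_idempotent_mult[OF assms(1)] False by simp
    also have "\<dots> = (f ^^ (m * j - j)) ((f ^^ j) x)"
      using \<open>m \<ge> 1\<close> by (simp add: funpow_apply_funpow)
    finally show ?thesis
      using assms(3) fixed by simp
  qed
qed

locale mod_matrix_map =
  fixes M :: "int ^ 'd ^ 'd" and N :: int
  assumes modulus_pos: "N > 0"
begin

abbreviation T :: "int ^ 'd \<Rightarrow> int ^ 'd" where "T \<equiv> Tmap M N"
abbreviation V :: "(int ^ 'd) set" where "V \<equiv> Ltil N"

definition reduce :: "int ^ 'd \<Rightarrow> int ^ 'd" where
  "reduce x = (\<chi> i. x $ i mod N)"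

lemma reduce_in_Ltil: "reduce x \<in> V"
  using modulus_pos by (simp add: reduce_def Ltil_def)

lemma reduce_eq_self: "x \<in> V \<Longrightarrow> reduce x = x"
  by (simp add: reduce_def Ltil_def vec_eq_iff)

lemma reduce_zero [simp]: "reduce 0 = 0"
  by (simp add: reduce_def vec_eq_iff)

lemma reduce_add: "reduce (reduce x + reduce y) = reduce (x + y)"
  by (simp add: reduce_def vec_eq_iff mod_add_eq)

lemma reduce_diff: "reduce (reduce x - reduce y) = reduce (x - y)"
  by (simp add: reduce_def vec_eq_iff mod_diff_eq)

lemma reduce_diff_eq_zero_iff:
  assumes "a \<in> V" and "b \<in> V"
  shows "reduce (a - b) = 0 \<longleftrightarrow> a = b"
proof -
  have "reduce (a - b) = 0 \<longleftrightarrow> reduce a = reduce b"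
    by (simp add: reduce_def vec_eq_iff mod_eq_dvd_iff mod_eq_0_iff_dvd)
  then show ?thesis
    using assms by (simp add: reduce_eq_self)
qed

lemma zero_in_Ltil: "0 \<in> V"
  using modulus_pos by (simp add: Ltil_def)

lemma Tmap_eq: "T x = reduce (M *v x)"
  by (simp add: Tmap_def reduce_def)

lemma Tmap_reduce: "T (reduce x) = T x"
proof -
  have "(\<Sum>j\<in>UNIV. M $ i $ j * (x $ j mod N)) mod N = (\<Sum>j\<in>UNIV. M $ i $ j * x $ j) mod N" for i
  proof -
    have "(\<Sum>j\<in>UNIV. M $ i $ j * (x $ j mod N)) mod N
        = (\<Sum>j\<in>UNIV. M $ i $ j * (x $ j mod N) mod N) mod N"
      by (simp add: mod_sum_eq)
    also have "\<dots> = (\<Sum>j\<in>UNIV. M $ i $ j * x $ j mod N) mod N"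
      by (simp add: mod_mult_right_eq)
    also have "\<dots> = (\<Sum>j\<in>UNIV. M $ i $ j * x $ j) mod N"
      by (simp add: mod_sum_eq)
    finally show ?thesis .
  qed
  then show ?thesis
    by (simp add: Tmap_def reduce_def matrix_vector_mult_def)
qed

lemma Tmap_in_Ltil: "T x \<in> V"
  by (simp add: Tmap_eq reduce_in_Ltil)

lemma funpow_Tmap_in_Ltil: "x \<in> V \<Longrightarrow> (T ^^ k) x \<in> V"
  by (rule funpow_in_invariant_set[OF Tmap_in_Ltil])

lemma Tmap_zero [simp]: "T 0 = 0"
  by (simp add: Tmap_eq)

lemma funpow_Tmap_zero [simp]: "(T ^^ k) 0 = 0"
  by (induction k) simp_all

lemma Tmap_reduce_add: "T (reduce (a + b)) = reduce (T a + T b)"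
proof -
  have "T (reduce (a + b)) = T (a + b)"
    by (rule Tmap_reduce)
  also have "\<dots> = reduce (M *v a + M *v b)"
    by (simp add: Tmap_eq matrix_vector_right_distrib)
  finally show ?thesis
    by (simp add: Tmap_eq reduce_add)
qed

lemma funpow_Tmap_reduce_add: "(T ^^ k) (reduce (a + b)) = reduce ((T ^^ k) a + (T ^^ k) b)"
  by (induction k) (simp_all add: Tmap_reduce_add)

lemma Tmap_reduce_diff: "T (reduce (a - b)) = reduce (T a - T b)"
proof -
  have "T (reduce (a - b)) = T (a - b)"
    by (rule Tmap_reduce)
  also have "\<dots> = reduce (M *v a - M *v b)"
    by (simp add: Tmap_eq matrix_vector_mult_diff_distrib)
  finally show ?thesis
    by (simp add: Tmap_eq reduce_diff)
qed

lemma funpow_Tmap_reduce_diff: "(T ^^ k) (reduce (a - b)) = reduce ((T ^^ k) a - (T ^^ k) b)"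
  by (induction k) (simp_all add: Tmap_reduce_diff)

definition idem_exp :: nat where
  "idem_exp = (SOME m. m \<ge> 1 \<and> (\<forall>x\<in>V. (T ^^ m) ((T ^^ m) x) = (T ^^ m) x))"

lemma idem_exp_pos: "idem_exp \<ge> 1"
  and idem_exp_idempotent: "x \<in> V \<Longrightarrow> (T ^^ idem_exp) ((T ^^ idem_exp) x) = (T ^^ idem_exp) x"
proof -
  have "\<exists>m\<ge>1. \<forall>x\<in>V. (T ^^ m) ((T ^^ m) x) = (T ^^ m) x"
    by (rule finite_self_map_idempotent_power[OF finite_Ltil]) (rule Tmap_in_Ltil)
  from someI_ex[OF this] show "idem_exp \<ge> 1"
    and "x \<in> V \<Longrightarrow> (T ^^ idem_exp) ((T ^^ idem_exp) x) = (T ^^ idem_exp) x"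
    unfolding idem_exp_def by blast+
qed

lemma periodic_pt_iff: "periodic_pt M N y \<longleftrightarrow> y \<in> V \<and> (T ^^ idem_exp) y = y"
  unfolding periodic_pt_def
  using funpow_idempotent_fixed[OF idem_exp_idempotent] idem_exp_pos by blast

lemma periodic_pt_zero: "periodic_pt M N 0"
  by (simp add: periodic_pt_iff zero_in_Ltil)

lemma funpow_idem_exp_eq_zero: "k \<in> V \<Longrightarrow> (T ^^ j) k = 0 \<Longrightarrow> (T ^^ idem_exp) k = 0"
  by (rule funpow_idempotent_reaches_fixpoint[OF idem_exp_idempotent idem_exp_pos]) simp_all

definition nil_part :: "int ^ 'd \<Rightarrow> int ^ 'd" where
  "nil_part z = reduce (z - (T ^^ idem_exp) z)"

lemma nil_part_in_Ltil: "nil_part z \<in> V"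
  by (simp add: nil_part_def reduce_in_Ltil)

lemma funpow_nil_part: "z \<in> V \<Longrightarrow> (T ^^ i) (nil_part z) = nil_part ((T ^^ i) z)"
  by (simp add: nil_part_def funpow_Tmap_reduce_diff funpow_commute_funpow)

lemma Tmap_nil_part: "z \<in> V \<Longrightarrow> T (nil_part z) = nil_part (T z)"
  using funpow_nil_part[of z 1] by simp

lemma periodic_pt_iff_nil_part: "z \<in> V \<Longrightarrow> periodic_pt M N z \<longleftrightarrow> nil_part z = 0"
  by (auto simp: periodic_pt_iff nil_part_def reduce_diff_eq_zero_iff funpow_Tmap_in_Ltil)

lemma periodic_pt_funpow_iff: "z \<in> V \<Longrightarrow> periodic_pt M N ((T ^^ i) z) \<longleftrightarrow> (T ^^ i) (nil_part z) = 0"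
  by (simp add: periodic_pt_iff_nil_part funpow_Tmap_in_Ltil funpow_nil_part)

lemma funpow_idem_exp_nil_part: "z \<in> V \<Longrightarrow> (T ^^ idem_exp) (nil_part z) = 0"
  by (simp only: funpow_nil_part) (simp add: nil_part_def idem_exp_idempotent)

lemma nil_part_eq_self: "z \<in> V \<Longrightarrow> (T ^^ idem_exp) z = 0 \<Longrightarrow> nil_part z = z"
  by (simp add: nil_part_def reduce_eq_self)

lemma reduce_nil_part_add: "z \<in> V \<Longrightarrow> reduce (nil_part z + (T ^^ idem_exp) z) = z"
  by (metis nil_part_def reduce_add reduce_eq_self funpow_Tmap_in_Ltil diff_add_cancel)

lemma nil_part_reduce_add:
  assumes "k \<in> V" and "p \<in> V" and "(T ^^ idem_exp) k = 0" and "(T ^^ idem_exp) p = p"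
  shows "(T ^^ idem_exp) (reduce (k + p)) = p" and "nil_part (reduce (k + p)) = k"
proof -
  show periodic: "(T ^^ idem_exp) (reduce (k + p)) = p"
    using assms by (simp add: funpow_Tmap_reduce_add reduce_eq_self)
  have "nil_part (reduce (k + p)) = reduce (reduce (k + p) - reduce p)"
    using assms(2) by (simp add: nil_part_def periodic reduce_eq_self)
  also have "\<dots> = k"
    using assms(1) by (simp add: reduce_diff reduce_eq_self)
  finally show "nil_part (reduce (k + p)) = k" .
qed

definition depth :: "int ^ 'd \<Rightarrow> nat" where
  "depth k = (LEAST j. (T ^^ j) k = 0)"

lemma funpow_depth: "(T ^^ j) k = 0 \<Longrightarrow> (T ^^ depth k) k = 0"
  unfolding depth_def by (rule LeastI)

lemma depth_le: "(T ^^ j) k = 0 \<Longrightarrow> depth k \<le> j"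
  unfolding depth_def by (rule Least_le)

lemma depth_zero [simp]: "depth 0 = 0"
  using depth_le[of 0 0] by simp

lemma depth_Tmap:
  assumes "(T ^^ j) k = 0" and "k \<noteq> 0"
  shows "depth k = Suc (depth (T k))"
proof -
  have "(LEAST j. (T ^^ j) k = 0) = Suc (LEAST j. (T ^^ Suc j) k = 0)"
    by (rule Least_Suc) (use assms in simp_all)
  then show ?thesis
    by (simp add: depth_def funpow_swap1)
qed

lemma mem_pretail_vertices:
  "z \<in> pretail_vertices M N y \<longleftrightarrow>
     (\<exists>x j. x \<in> V \<and> (T ^^ j) x = y \<and> {w \<in> {(T ^^ i) x | i. i \<le> j}. periodic_pt M N w} = {y}
            \<and> (\<exists>i\<le>j. z = (T ^^ i) x))"
  unfolding pretail_vertices_def is_pretail_def by blast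

lemma pretail_vertices_iff:
  assumes y: "periodic_pt M N y"
  shows "z \<in> pretail_vertices M N y \<longleftrightarrow> z \<in> V \<and> (T ^^ depth (nil_part z)) z = y"
proof
  assume "z \<in> pretail_vertices M N y"
  then obtain x j i where x: "x \<in> V" "(T ^^ j) x = y"
    and only_y: "{w \<in> {(T ^^ i) x | i. i \<le> j}. periodic_pt M N w} = {y}"
    and z: "i \<le> j" "z = (T ^^ i) x"
    unfolding mem_pretail_vertices by blast
  let ?d = "depth (nil_part z)"
  have nil_z: "nil_part z = (T ^^ i) (nil_part x)"
    using x z by (simp add: funpow_nil_part)
  have "(T ^^ j) (nil_part x) = 0"
    using periodic_pt_funpow_iff[OF x(1), of j] y by (simp add: x(2))
  then have "(T ^^ (j - i)) (nil_part z) = 0"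
    using z(1) by (simp add: nil_z funpow_apply_funpow)
  then have "?d \<le> j - i" and "(T ^^ ?d) (nil_part z) = 0"
    by (rule depth_le, rule funpow_depth)
  then have "?d + i \<le> j" and "periodic_pt M N ((T ^^ (?d + i)) x)"
    using z(1) by (simp_all add: periodic_pt_funpow_iff[OF x(1)] nil_z funpow_apply_funpow)
  then have "(T ^^ (?d + i)) x = y"
    using only_y by blast
  then show "z \<in> V \<and> (T ^^ ?d) z = y"
    using x z by (simp add: funpow_Tmap_in_Ltil funpow_apply_funpow)
next
  assume "z \<in> V \<and> (T ^^ depth (nil_part z)) z = y"
  then have "z \<in> V" and z_y: "(T ^^ depth (nil_part z)) z = y"
    by simp_all
  let ?d = "depth (nil_part z)"
  have "{w \<in> {(T ^^ i) z | i. i \<le> ?d}. periodic_pt M N w} = {y}"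
  proof (intro equalityI subsetI)
    fix w assume "w \<in> {w \<in> {(T ^^ i) z | i. i \<le> ?d}. periodic_pt M N w}"
    then obtain i where "i \<le> ?d" and w: "w = (T ^^ i) z" "periodic_pt M N w"
      by blast
    then have "?d \<le> i"
      by (intro depth_le) (simp add: periodic_pt_funpow_iff[OF \<open>z \<in> V\<close>])
    then show "w \<in> {y}"
      using \<open>i \<le> ?d\<close> w(1) z_y by simp
  next
    fix w assume "w \<in> {y}"
    then show "w \<in> {w \<in> {(T ^^ i) z | i. i \<le> ?d}. periodic_pt M N w}"
      using z_y y by blast
  qed
  moreover have "\<exists>i\<le>?d. z = (T ^^ i) z"
    by (intro exI[of _ 0]) simp
  ultimately show "z \<in> pretail_vertices M N y"
    unfolding mem_pretail_vertices using \<open>z \<in> V\<close> z_y by blast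
qed

lemma pretail_vertices_zero: "z \<in> pretail_vertices M N 0 \<longleftrightarrow> z \<in> V \<and> (T ^^ idem_exp) z = 0"
  using funpow_idem_exp_eq_zero funpow_depth nil_part_eq_self
  by (auto simp: pretail_vertices_iff[OF periodic_pt_zero])

lemma pretail_edges_iff:
  "(a, b) \<in> pretail_edges M N y \<longleftrightarrow> a \<in> pretail_vertices M N y \<and> a \<noteq> y \<and> b = T a"
  by (auto simp: pretail_edges_def)

lemma nil_part_eq_zero_iff_root:
  assumes y: "periodic_pt M N y" and a: "a \<in> pretail_vertices M N y"
  shows "nil_part a = 0 \<longleftrightarrow> a = y"
  using a y periodic_pt_iff_nil_part by (auto simp: pretail_vertices_iff[OF y] periodic_pt_iff)

lemma Tmap_mem_pretail_vertices:
  assumes y: "periodic_pt M N y" and a: "a \<in> pretail_vertices M N y" "a \<noteq> y"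
  shows "T a \<in> pretail_vertices M N y"
proof -
  have "a \<in> V" and a_y: "(T ^^ depth (nil_part a)) a = y"
    using a(1) by (simp_all add: pretail_vertices_iff[OF y])
  have "nil_part a \<noteq> 0"
    using nil_part_eq_zero_iff_root[OF y a(1)] a(2) by simp
  then have "depth (nil_part a) = Suc (depth (nil_part (T a)))"
    using depth_Tmap[OF funpow_idem_exp_nil_part[OF \<open>a \<in> V\<close>]] Tmap_nil_part[OF \<open>a \<in> V\<close>]
    by simp
  then have "(T ^^ depth (nil_part (T a))) (T a) = y"
    using a_y by (simp add: funpow_swap1)
  then show ?thesis
    by (simp add: pretail_vertices_iff[OF y] Tmap_in_Ltil)
qed

lemma funpow_idem_exp_pretail_vertex:
  assumes y: "periodic_pt M N y" and z: "z \<in> pretail_vertices M N y"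
  shows "(T ^^ idem_exp) z = (T ^^ (idem_exp - depth (nil_part z))) y"
proof -
  have "z \<in> V" and z_y: "(T ^^ depth (nil_part z)) z = y"
    using z by (simp_all add: pretail_vertices_iff[OF y])
  have "depth (nil_part z) \<le> idem_exp"
    by (rule depth_le[OF funpow_idem_exp_nil_part[OF \<open>z \<in> V\<close>]])
  then show ?thesis
    by (simp flip: z_y add: funpow_apply_funpow)
qed

lemma inj_on_nil_part_pretail_vertices:
  assumes y: "periodic_pt M N y"
  shows "inj_on nil_part (pretail_vertices M N y)"
proof
  fix z w
  assume z: "z \<in> pretail_vertices M N y" and w: "w \<in> pretail_vertices M N y"
    and eq: "nil_part z = nil_part w"
  have "z = reduce (nil_part z + (T ^^ idem_exp) z)"
    using z by (simp add: reduce_nil_part_add pretail_vertices_iff[OF y])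
  also have "\<dots> = reduce (nil_part w + (T ^^ idem_exp) w)"
    using eq
    by (simp add: funpow_idem_exp_pretail_vertex[OF y z] funpow_idem_exp_pretail_vertex[OF y w])
  also have "\<dots> = w"
    using w by (simp add: reduce_nil_part_add pretail_vertices_iff[OF y])
  finally show "z = w" .
qed

lemma nil_part_image_pretail_vertices:
  assumes y: "periodic_pt M N y"
  shows "nil_part ` pretail_vertices M N y = pretail_vertices M N 0"
proof (intro equalityI subsetI)
  fix k assume "k \<in> nil_part ` pretail_vertices M N y"
  then show "k \<in> pretail_vertices M N 0"
    by (auto simp: pretail_vertices_iff[OF y] pretail_vertices_zero nil_part_in_Ltil
        funpow_idem_exp_nil_part)
next
  fix k assume "k \<in> pretail_vertices M N 0"
  then have "k \<in> V" and k_ker: "(T ^^ idem_exp) k = 0"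
    by (simp_all add: pretail_vertices_zero)
  have "y \<in> V" and y_fix: "(T ^^ idem_exp) y = y"
    using y by (simp_all add: periodic_pt_iff)
  let ?d = "depth k"
  have "?d \<le> idem_exp" and "(T ^^ ?d) k = 0"
    using k_ker by (rule depth_le, rule funpow_depth)
  txt \<open>The preimage of \<open>k\<close> is \<open>k + p\<close> with \<open>p\<close> the point of the cycle of \<open>y\<close> that
    reaches \<open>y\<close> in \<open>depth k\<close> steps.\<close>
  define p where "p = (T ^^ (idem_exp - ?d)) y"
  have "p \<in> V"
    using \<open>y \<in> V\<close> by (simp add: p_def funpow_Tmap_in_Ltil)
  have p_fix: "(T ^^ idem_exp) p = p"
    by (simp add: p_def funpow_commute_funpow[where f = T and a = idem_exp] y_fix)
  have "(T ^^ ?d) p = y"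
    using \<open>?d \<le> idem_exp\<close> y_fix by (simp add: p_def funpow_apply_funpow)
  define z where "z = reduce (k + p)"
  have nil_z: "nil_part z = k"
    using nil_part_reduce_add[OF \<open>k \<in> V\<close> \<open>p \<in> V\<close> k_ker p_fix] by (simp add: z_def)
  have "(T ^^ ?d) z = y"
    using \<open>(T ^^ ?d) k = 0\<close> \<open>(T ^^ ?d) p = y\<close> \<open>y \<in> V\<close>
    by (simp add: z_def funpow_Tmap_reduce_add reduce_eq_self)
  moreover have "z \<in> V"
    by (simp add: z_def reduce_in_Ltil)
  ultimately have "z \<in> pretail_vertices M N y"
    by (simp add: pretail_vertices_iff[OF y] nil_z)
  then show "k \<in> nil_part ` pretail_vertices M N y"
    using nil_z by blast
qed

theorem pretail_graph_iso_zero: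
  assumes y: "periodic_pt M N y"
  shows "digraph_iso (pretail_vertices M N y) (pretail_edges M N y)
                     (pretail_vertices M N 0) (pretail_edges M N 0)"
  unfolding digraph_iso_def
proof (intro exI conjI ballI)
  show "bij_betw nil_part (pretail_vertices M N y) (pretail_vertices M N 0)"
    using inj_on_nil_part_pretail_vertices[OF y] nil_part_image_pretail_vertices[OF y]
    by (simp add: bij_betw_def)
next
  fix a b assume a: "a \<in> pretail_vertices M N y" and b: "b \<in> pretail_vertices M N y"
  have "a \<in> V"
    using a by (simp add: pretail_vertices_iff[OF y])
  have "nil_part a \<in> pretail_vertices M N 0"
    using a nil_part_image_pretail_vertices[OF y] by blast
  have "b = T a \<longleftrightarrow> nil_part b = nil_part (T a)" if "a \<noteq> y"
    using inj_on_nil_part_pretail_vertices[OF y] b Tmap_mem_pretail_vertices[OF y a that]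
    by (auto dest: inj_onD)
  then show "(a, b) \<in> pretail_edges M N y \<longleftrightarrow> (nil_part a, nil_part b) \<in> pretail_edges M N 0"
    using a \<open>nil_part a \<in> pretail_vertices M N 0\<close> nil_part_eq_zero_iff_root[OF y a]
    by (auto simp: pretail_edges_iff Tmap_nil_part[OF \<open>a \<in> V\<close>])
qed

lemma rtrancl_pretail_edges_root:
  assumes y: "periodic_pt M N y"
  shows "z \<in> pretail_vertices M N y \<Longrightarrow> (T ^^ j) z = y \<Longrightarrow> (z, y) \<in> (pretail_edges M N y)\<^sup>*"
proof (induction j arbitrary: z)
  case (Suc j)
  show ?case
  proof (cases "z = y")
    case False
    have "(z, T z) \<in> pretail_edges M N y"
      using Suc.prems False by (simp add: pretail_edges_iff)
    moreover have "(T z, y) \<in> (pretail_edges M N y)\<^sup>*"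
      using Suc.IH Tmap_mem_pretail_vertices[OF y Suc.prems(1) False] Suc.prems(2)
      by (simp add: funpow_swap1)
    ultimately show ?thesis
      by (rule converse_rtrancl_into_rtrancl)
  qed simp
qed simp

theorem pretail_tree_zero: "rooted_tree (pretail_vertices M N 0) ((pretail_edges M N 0)\<inverse>) 0"
  unfolding rooted_tree_def
proof (intro conjI ballI allI)
  show "finite (pretail_vertices M N 0)"
    by (rule finite_subset[OF _ finite_Ltil]) (auto simp: pretail_vertices_zero)
  show "0 \<in> pretail_vertices M N 0"
    by (simp add: pretail_vertices_zero zero_in_Ltil)
  show "(pretail_edges M N 0)\<inverse> \<subseteq> pretail_vertices M N 0 \<times> pretail_vertices M N 0"
    using Tmap_mem_pretail_vertices[OF periodic_pt_zero] by (auto simp: pretail_edges_iff)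
  show "(u, 0) \<notin> (pretail_edges M N 0)\<inverse>" for u
    by (simp add: pretail_edges_iff)
  show "\<exists>!u. (u, v) \<in> (pretail_edges M N 0)\<inverse>" if "v \<in> pretail_vertices M N 0 - {0}" for v
    using that by (auto simp: pretail_edges_iff)
  show "(0, v) \<in> ((pretail_edges M N 0)\<inverse>)\<^sup>*" if "v \<in> pretail_vertices M N 0" for v
    using rtrancl_pretail_edges_root[OF periodic_pt_zero that, of idem_exp] that
    by (simp add: pretail_vertices_zero rtrancl_converse)
qed

lemma inj_on_Tmap_iff_kernel:
  "inj_on T V \<longleftrightarrow> (\<forall>k\<in>V. T k = 0 \<longrightarrow> k = 0)"
proof
  assume "inj_on T V"
  then show "\<forall>k\<in>V. T k = 0 \<longrightarrow> k = 0"
    using inj_onD[of T V _ 0] zero_in_Ltil by simp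
next
  assume kernel: "\<forall>k\<in>V. T k = 0 \<longrightarrow> k = 0"
  show "inj_on T V"
  proof
    fix a b assume "a \<in> V" "b \<in> V" "T a = T b"
    then have "T (reduce (a - b)) = 0"
      by (simp add: Tmap_reduce_diff)
    then show "a = b"
      using kernel reduce_in_Ltil reduce_diff_eq_zero_iff[OF \<open>a \<in> V\<close> \<open>b \<in> V\<close>] by blast
  qed
qed

theorem pretail_vertices_zero_trivial_iff:
  "pretail_vertices M N 0 = {0} \<longleftrightarrow> bij_betw T V V"
proof
  assume trivial: "pretail_vertices M N 0 = {0}"
  have "\<forall>k\<in>V. T k = 0 \<longrightarrow> k = 0"
    using funpow_idem_exp_eq_zero[where j = 1] trivial by (auto simp: pretail_vertices_zero)
  then have "inj_on T V"
    by (simp add: inj_on_Tmap_iff_kernel)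
  moreover have "T ` V = V"
    by (rule endo_inj_surj[OF finite_Ltil _ \<open>inj_on T V\<close>]) (auto simp: Tmap_in_Ltil)
  ultimately show "bij_betw T V V"
    by (simp add: bij_betw_def)
next
  assume "bij_betw T V V"
  then have "inj_on (T ^^ idem_exp) V"
    using bij_betw_funpow bij_betw_imp_inj_on by blast
  then show "pretail_vertices M N 0 = {0}"
    using inj_onD[of "T ^^ idem_exp" V _ 0] zero_in_Ltil by (auto simp: pretail_vertices_zero)
qed

end

theorem corollary3p3:
  fixes M :: "int ^ 'd ^ 'd" and n :: nat
  assumes "n \<ge> 1"
  shows "(\<forall>y. periodic_pt M (int n) y \<longrightarrow>
            digraph_iso (pretail_vertices M (int n) y) (pretail_edges M (int n) y)
                        (pretail_vertices M (int n) 0) (pretail_edges M (int n) 0))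
       \<and> rooted_tree (pretail_vertices M (int n) 0) ((pretail_edges M (int n) 0)\<inverse>) 0
       \<and> (pretail_vertices M (int n) 0 = {0} \<longleftrightarrow> bij_betw (Tmap M (int n)) (Ltil (int n)) (Ltil (int n)))"
proof -
  interpret mod_matrix_map M "int n"
    using assms by unfold_locales simp
  show ?thesis
    using pretail_graph_iso_zero pretail_tree_zero pretail_vertices_zero_trivial_iff by blast
qed

end
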